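(* Consider the following drone network. Drone base stations (DBSs) move in a plane (the DBS plane) at constant height above the ground; let $\mathbf{o}'$ be a fixed reference point of this plane. At time $0$ the DBS locations form a homogeneous Poisson point process (PPP) of density $\lambda_0$. The serving DBS is the DBS nearest to $\mathbf{o}'$ at time $0$, at distance $u_0$ from $\mathbf{o}'$; conditioned on $u_0$, the other DBSs (the interfering DBSs) at time $0$ form a PPP with density $\lambda_0$ outside the disc $b(\mathbf{o}',u_0)$ and density $0$ inside it. The serving DBS flies towards $\mathbf{o}'$ at speed $v$ and hovers there after arrival (UE dependent model). The interfering DBSs move according to an i.i.d. mobility model with speed $v$. Then, for every time $t$ and every $u_0$, the expected number of interfering DBSs located at time $t$ in the disc $\mathcal{B}=b(\mathbf{o}',u_0+vt)$ is maximized, over the space of all i.i.d. mobility models (including ones in which the drones follow curved trajectories), by the straight-line (SL) mobility model.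
   Context: $b(\mathbf{x},r)$ denotes the disc of radius $r$ centered at $\mathbf{x}$ in the DBS plane. An i.i.d. mobility model (with speed $v$): each interfering DBS follows a trajectory drawn independently of the other DBSs and of the initial locations, from a common distribution, moving at constant speed $v$; the direction of its net displacement is uniform on $[0,2\pi)$ and independent of the length $L(t)=\|\mathbf{x}(t)-\mathbf{x}(0)\|$ of the net displacement up to time $t$ (so $L(t)\le vt$). SL mobility model: each DBS moves forever along a straight line in a direction $\Theta\sim U[0,2\pi)$, drawn independently of other DBSs, at constant speed $v$ (so $L(t)=vt$). *)

theory Defs
  imports "HOL-Probability.Probability"
begin

text \<open>Points of the DBS plane are modelled as real \<times> real (Euclidean norm).
A mobility model of a single DBS is a random trajectory of displacements:
X w s = x(s) - x(0) on a probability space M.\<close>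

definition uniform_angle :: "'w measure \<Rightarrow> ('w \<Rightarrow> real) \<Rightarrow> bool" where
  "uniform_angle M \<Theta> \<longleftrightarrow>
     \<Theta> \<in> borel_measurable M \<and> distr M borel \<Theta> = uniform_measure lborel {0..<2*pi}"

text \<open>i.i.d. mobility model with speed v (law of the displacement trajectory of one
interfering DBS; the DBSs use independent copies, independent of initial locations):
speed v (so the net displacement satisfies dist(x(s),x(s')) <= v|s-s'|), and for every
time t the direction of the net displacement is uniform on [0,2 pi) and independent of
its length L(t).\<close>
definition iid_mobility :: "'w measure \<Rightarrow> ('w \<Rightarrow> real \<Rightarrow> real \<times> real) \<Rightarrow> real \<Rightarrow> bool" where
  "iid_mobility M X v \<longleftrightarrow>
     prob_space M \<and>
     (\<forall>w. X w 0 = 0) \<and>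
     (\<forall>w s s'. 0 \<le> s \<longrightarrow> 0 \<le> s' \<longrightarrow> dist (X w s) (X w s') \<le> v * \<bar>s - s'\<bar>) \<and>
     (\<forall>t\<ge>0. (\<lambda>w. X w t) \<in> borel_measurable M \<and>
        (\<exists>\<Theta>. uniform_angle M \<Theta> \<and>
              prob_space.indep_var M borel (\<lambda>w. norm (X w t)) borel \<Theta> \<and>
              (\<forall>w\<in>space M. X w t = (norm (X w t) * cos (\<Theta> w), norm (X w t) * sin (\<Theta> w)))))"

definition sl_traj :: "real \<Rightarrow> ('w \<Rightarrow> real) \<Rightarrow> 'w \<Rightarrow> real \<Rightarrow> real \<times> real" where
  "sl_traj v \<Theta> w s = (v * s * cos (\<Theta> w), v * s * sin (\<Theta> w))"

text \<open>Expected number of interfering DBSs in the set A at time t: initial positions form a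
PPP of density lam0 outside the disc b(c,u0) (density 0 inside), each point is displaced
independently according to the mobility model (M,X).  By the definition of the mean measure
of the independently marked PPP this is the integral below.\<close>
definition interf_count ::
  "real \<Rightarrow> real \<times> real \<Rightarrow> real \<Rightarrow> 'w measure \<Rightarrow> ('w \<Rightarrow> real \<Rightarrow> real \<times> real) \<Rightarrow> real
     \<Rightarrow> (real \<times> real) set \<Rightarrow> ennreal" where
  "interf_count lam0 c u0 M X t A =
     (\<integral>\<^sup>+ x. ennreal lam0 * indicator (- ball c u0) x * emeasure M {w \<in> space M. x + X w t \<in> A} \<partial>lborel)"

end

(* Any mobility model of speed v displaces a point by at most v t up to time t.  By the
   displacement theorem (Fubini plus translation invariance of Lebesgue measure), displacing
   the points of a PPP of density lam0 on the whole plane independently leaves its mean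
   measure lam0 times Lebesgue measure, and every point started in b(o',u0), the region
   without interferers, ends in B = b(o',u0 + v t).  Hence the expected number of
   interferers in B is lam0 (|B| - |b(o',u0)|) for every i.i.d. mobility model: the SL model
   attains the maximum, with equality. *)

theory Submission
  imports Defs
begin

lemma (in prob_space) indep_var_const:
  assumes "k \<in> space T" and "Y \<in> measurable M S"
  shows "indep_var T (\<lambda>_. k) S Y"
  unfolding indep_var_eq
proof (intro conjI measurable_const assms indep_setI)
  have const_events: "sigma_sets (space M) {(\<lambda>_. k) -` A \<inter> space M | A. A \<in> sets T} \<subseteq> {{}, space M}"
    by (rule sigma_algebra.sigma_sets_subset[OF sigma_algebra_trivial]) auto
  then show "sigma_sets (space M) {(\<lambda>_. k) -` A \<inter> space M | A. A \<in> sets T} \<subseteq> events"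
    by (rule order.trans) simp
  have Y_events: "sigma_sets (space M) {Y -` A \<inter> space M | A. A \<in> sets S} \<subseteq> events"
    by (rule sets.sigma_sets_subset) (auto intro: measurable_sets assms)
  then show "sigma_sets (space M) {Y -` A \<inter> space M | A. A \<in> sets S} \<subseteq> events" .
  fix a b
  assume "a \<in> sigma_sets (space M) {(\<lambda>_. k) -` A \<inter> space M | A. A \<in> sets T}"
    and "b \<in> sigma_sets (space M) {Y -` A \<inter> space M | A. A \<in> sets S}"
  then have "a \<in> {{}, space M}" and "b \<in> events"
    using const_events Y_events by blast+
  then show "prob (a \<inter> b) = prob a * prob b"
    by (auto simp: prob_space Int_absorb1 sets.sets_into_space)
qed

lemma norm_polar: "norm (r * cos \<theta>, r * sin \<theta>) = \<bar>r\<bar>"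
proof -
  have "(r * cos \<theta>)\<^sup>2 + (r * sin \<theta>)\<^sup>2 = r\<^sup>2 * ((sin \<theta>)\<^sup>2 + (cos \<theta>)\<^sup>2)"
    by (simp only: power_mult_distrib distrib_left add.commute)
  then have "(r * cos \<theta>)\<^sup>2 + (r * sin \<theta>)\<^sup>2 = r\<^sup>2"
    by simp
  then show ?thesis
    by (simp add: norm_Pair)
qed

lemma norm_sl_traj: "norm (sl_traj v \<Theta> w s) = \<bar>v * s\<bar>"
  unfolding sl_traj_def by (rule norm_polar)

lemma dist_sl_traj:
  assumes "v \<ge> 0"
  shows "dist (sl_traj v \<Theta> w s) (sl_traj v \<Theta> w s') = v * \<bar>s - s'\<bar>"
proof -
  have "sl_traj v \<Theta> w s - sl_traj v \<Theta> w s' = (v * (s - s') * cos (\<Theta> w), v * (s - s') * sin (\<Theta> w))"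
    by (simp add: sl_traj_def algebra_simps)
  then show ?thesis
    using assms by (simp add: dist_norm norm_polar abs_mult)
qed

lemma iid_mobility_sl_traj:
  assumes "prob_space N" and "uniform_angle N \<Theta>" and "v \<ge> 0"
  shows "iid_mobility N (sl_traj v \<Theta>) v"
  unfolding iid_mobility_def
proof (intro conjI allI impI)
  have [measurable]: "\<Theta> \<in> borel_measurable N"
    using assms(2) unfolding uniform_angle_def by blast
  show "prob_space N" by fact
  show "sl_traj v \<Theta> w 0 = 0" for w
    by (simp add: sl_traj_def zero_prod_def)
  show "dist (sl_traj v \<Theta> w s) (sl_traj v \<Theta> w s') \<le> v * \<bar>s - s'\<bar>" for w s s'
    using assms(3) by (simp add: dist_sl_traj)
  fix s :: real
  assume "0 \<le> s"
  then have norm_eq: "norm (sl_traj v \<Theta> w s) = v * s" for w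
    using assms(3) by (simp add: norm_sl_traj)
  show "(\<lambda>w. sl_traj v \<Theta> w s) \<in> borel_measurable N"
    unfolding sl_traj_def by measurable
  have "prob_space.indep_var N borel (\<lambda>_. v * s) borel \<Theta>"
    by (rule prob_space.indep_var_const[OF assms(1)]) measurable
  then show "\<exists>\<Theta>'. uniform_angle N \<Theta>' \<and>
      prob_space.indep_var N borel (\<lambda>w. norm (sl_traj v \<Theta> w s)) borel \<Theta>' \<and>
      (\<forall>w\<in>space N. sl_traj v \<Theta> w s =
         (norm (sl_traj v \<Theta> w s) * cos (\<Theta>' w), norm (sl_traj v \<Theta> w s) * sin (\<Theta>' w)))"
    using assms(2) unfolding norm_eq by (intro exI[of _ \<Theta>]) (simp add: sl_traj_def)
qed

lemma iid_mobility_norm_le: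
  assumes "iid_mobility M X v" and "t \<ge> 0"
  shows "norm (X w t) \<le> v * t"
proof -
  have "dist (X w t) (X w 0) \<le> v * \<bar>t - 0\<bar>" and "X w 0 = 0"
    using assms unfolding iid_mobility_def by blast+
  with assms(2) show ?thesis
    by (simp add: dist_norm)
qed

lemma nn_integral_indicator_translate:
  fixes a :: "'a::euclidean_space"
  assumes "B \<in> sets borel"
  shows "(\<integral>\<^sup>+x. indicator B (x + a) \<partial>lborel) = emeasure lborel B"
proof -
  have "(\<integral>\<^sup>+x. indicator B (x + a) \<partial>lborel) = (\<integral>\<^sup>+x. indicator B ((+) a x) \<partial>lborel)"
    by (simp add: add.commute)
  also have "\<dots> = integral\<^sup>N (distr lborel borel ((+) a)) (indicator B)"
    using assms by (intro nn_integral_distr[symmetric]) auto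
  also have "\<dots> = emeasure lborel B"
    using assms by (simp add: lborel_distr_plus)
  finally show ?thesis .
qed

lemma emeasure_translate_eq_nn_integral:
  fixes Y :: "'w \<Rightarrow> 'a::euclidean_space"
  assumes [measurable]: "Y \<in> borel_measurable M" "B \<in> sets borel"
  shows "emeasure M {w \<in> space M. x + Y w \<in> B} = (\<integral>\<^sup>+w. indicator B (x + Y w) \<partial>M)"
proof -
  have "emeasure M {w \<in> space M. x + Y w \<in> B} = (\<integral>\<^sup>+w. indicator {w \<in> space M. x + Y w \<in> B} w \<partial>M)"
    by (intro nn_integral_indicator[symmetric]) measurable
  also have "\<dots> = (\<integral>\<^sup>+w. indicator B (x + Y w) \<partial>M)"
    by (intro nn_integral_cong) (simp split: split_indicator)
  finally show ?thesis .
qed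

lemma borel_measurable_emeasure_translate:
  fixes Y :: "'w \<Rightarrow> 'a::euclidean_space"
  assumes "sigma_finite_measure M" and [measurable]: "Y \<in> borel_measurable M" "B \<in> sets borel"
  shows "(\<lambda>x. emeasure M {w \<in> space M. x + Y w \<in> B}) \<in> borel_measurable borel"
proof -
  interpret sigma_finite_measure M by fact
  have "(\<lambda>x. \<integral>\<^sup>+w. indicator B (x + Y w) \<partial>M) \<in> borel_measurable borel"
    by measurable
  then show ?thesis
    by (simp add: emeasure_translate_eq_nn_integral)
qed

lemma nn_integral_random_translate:
  fixes Y :: "'w \<Rightarrow> 'a::euclidean_space"
  assumes "prob_space M" and [measurable]: "Y \<in> borel_measurable M" "B \<in> sets borel"
  shows "(\<integral>\<^sup>+x. emeasure M {w \<in> space M. x + Y w \<in> B} \<partial>lborel) = emeasure lborel B"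
proof -
  interpret prob_space M by fact
  interpret pair_sigma_finite lborel M ..
  have "(\<lambda>(x, w). indicator B (x + Y w) :: ennreal) \<in> borel_measurable (lborel \<Otimes>\<^sub>M M)"
    by measurable
  from Fubini'[OF this]
  have "(\<integral>\<^sup>+x. (\<integral>\<^sup>+w. indicator B (x + Y w) \<partial>M) \<partial>lborel)
      = (\<integral>\<^sup>+w. (\<integral>\<^sup>+x. indicator B (x + Y w) \<partial>lborel) \<partial>M)"
    by (simp only: split_beta fst_conv snd_conv)
  also have "\<dots> = (\<integral>\<^sup>+w. emeasure lborel B \<partial>M)"
    using assms(3) by (intro nn_integral_cong nn_integral_indicator_translate)
  also have "\<dots> = emeasure lborel B"
    by (simp add: emeasure_space_1)
  finally show ?thesis
    by (simp add: emeasure_translate_eq_nn_integral)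
qed

lemma emeasure_translate_into_larger_ball:
  fixes Y :: "'w \<Rightarrow> 'a::euclidean_space"
  assumes "prob_space M" and "x \<in> ball c u0" and "\<And>w. w \<in> space M \<Longrightarrow> norm (Y w) \<le> r"
  shows "emeasure M {w \<in> space M. x + Y w \<in> ball c (u0 + r)} = 1"
proof -
  have "x + Y w \<in> ball c (u0 + r)" if "w \<in> space M" for w
  proof -
    have "dist c (x + Y w) \<le> dist c x + norm (Y w)"
      using dist_triangle[of c "x + Y w" x] by (simp add: dist_norm)
    then show ?thesis
      using assms(2) assms(3)[OF that] by simp
  qed
  then have "{w \<in> space M. x + Y w \<in> ball c (u0 + r)} = space M"
    by blast
  then show ?thesis
    using prob_space.emeasure_space_1[OF assms(1)] by simp
qed

text \<open>Points starting in the ball b(c,u0) all end in b(c,u0+r), so the points starting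
outside it that end there carry exactly the remaining Lebesgue measure.\<close>
lemma nn_integral_random_translate_from_outside_ball:
  fixes Y :: "'w \<Rightarrow> 'a::euclidean_space"
  assumes "prob_space M" and [measurable]: "Y \<in> borel_measurable M"
    and bounded: "\<And>w. w \<in> space M \<Longrightarrow> norm (Y w) \<le> r"
  shows "(\<integral>\<^sup>+x. indicator (- ball c u0) x * emeasure M {w \<in> space M. x + Y w \<in> ball c (u0 + r)} \<partial>lborel)
    = emeasure lborel (ball c (u0 + r)) - emeasure lborel (ball c u0)"
proof -
  define g where "g x = emeasure M {w \<in> space M. x + Y w \<in> ball c (u0 + r)}" for x
  have [measurable]: "g \<in> borel_measurable borel"
    unfolding g_def
    by (rule borel_measurable_emeasure_translate[OF prob_space_imp_sigma_finite[OF assms(1)]]) simp_all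
  have [measurable]: "ball c u0 \<in> sets borel"
    by simp
  have "emeasure lborel (ball c (u0 + r)) = (\<integral>\<^sup>+x. g x \<partial>lborel)"
    unfolding g_def by (rule nn_integral_random_translate[OF assms(1,2), symmetric]) simp
  also have "\<dots> = (\<integral>\<^sup>+x. indicator (- ball c u0) x * g x + indicator (ball c u0) x * g x \<partial>lborel)"
    by (intro nn_integral_cong) (simp split: split_indicator)
  also have "\<dots> = (\<integral>\<^sup>+x. indicator (- ball c u0) x * g x \<partial>lborel)
      + (\<integral>\<^sup>+x. indicator (ball c u0) x * g x \<partial>lborel)"
    by (rule nn_integral_add) measurable
  also have "(\<integral>\<^sup>+x. indicator (ball c u0) x * g x \<partial>lborel) = (\<integral>\<^sup>+x. indicator (ball c u0) x \<partial>lborel)"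
  proof (intro nn_integral_cong)
    fix x
    have "g x = 1" if "x \<in> ball c u0"
      unfolding g_def using assms(1) that bounded by (rule emeasure_translate_into_larger_ball)
    then show "indicator (ball c u0) x * g x = indicator (ball c u0) x"
      by (simp split: split_indicator)
  qed
  also have "\<dots> = emeasure lborel (ball c u0)"
    by simp
  finally have sum: "emeasure lborel (ball c (u0 + r))
      = (\<integral>\<^sup>+x. indicator (- ball c u0) x * g x \<partial>lborel) + emeasure lborel (ball c u0)" .
  have "emeasure lborel (ball c u0) \<noteq> \<top>"
    using emeasure_lborel_ball_finite[of c u0] by (simp add: less_top)
  then show ?thesis
    unfolding sum g_def by (rule ennreal_add_diff_cancel_right[symmetric])
qed

lemma interf_count_ball:
  assumes "prob_space M" and "(\<lambda>w. X w t) \<in> borel_measurable M"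
    and "\<And>w. w \<in> space M \<Longrightarrow> norm (X w t) \<le> r"
  shows "interf_count lam0 c u0 M X t (ball c (u0 + r))
    = ennreal lam0 * (emeasure lborel (ball c (u0 + r)) - emeasure lborel (ball c u0))"
proof -
  have [measurable]: "(\<lambda>x. emeasure M {w \<in> space M. x + X w t \<in> ball c (u0 + r)}) \<in> borel_measurable borel"
    using prob_space_imp_sigma_finite[OF assms(1)] assms(2)
    by (rule borel_measurable_emeasure_translate) simp
  have "interf_count lam0 c u0 M X t (ball c (u0 + r))
      = ennreal lam0 * (\<integral>\<^sup>+x. indicator (- ball c u0) x * emeasure M {w \<in> space M. x + X w t \<in> ball c (u0 + r)} \<partial>lborel)"
    unfolding interf_count_def mult.assoc by (rule nn_integral_cmult) measurable
  also have "\<dots> = ennreal lam0 * (emeasure lborel (ball c (u0 + r)) - emeasure lborel (ball c u0))"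
    by (simp only: nn_integral_random_translate_from_outside_ball[OF assms])
  finally show ?thesis .
qed

lemma interf_count_iid_mobility:
  assumes "iid_mobility M X v" and "t \<ge> 0"
  shows "interf_count lam0 c u0 M X t (ball c (u0 + v * t))
    = ennreal lam0 * (emeasure lborel (ball c (u0 + v * t)) - emeasure lborel (ball c u0))"
proof (rule interf_count_ball)
  show "prob_space M" "(\<lambda>w. X w t) \<in> borel_measurable M"
    using assms unfolding iid_mobility_def by blast+
  show "norm (X w t) \<le> v * t" for w
    using assms by (rule iid_mobility_norm_le)
qed

theorem theorem1:
  fixes lam0 v t u0 :: real and c :: "real \<times> real"
    and M :: "'a measure" and X :: "'a \<Rightarrow> real \<Rightarrow> real \<times> real"
    and N :: "'b measure" and \<Theta> :: "'b \<Rightarrow> real"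
  assumes "lam0 > 0" and "v \<ge> 0" and "t \<ge> 0" and "u0 \<ge> 0"
    and "iid_mobility M X v"
    and "prob_space N" and "uniform_angle N \<Theta>"
  shows "iid_mobility N (sl_traj v \<Theta>) v \<and>
         interf_count lam0 c u0 M X t (ball c (u0 + v * t))
           \<le> interf_count lam0 c u0 N (sl_traj v \<Theta>) t (ball c (u0 + v * t))"
proof
  show sl: "iid_mobility N (sl_traj v \<Theta>) v"
    using assms(6,7,2) by (rule iid_mobility_sl_traj)
  show "interf_count lam0 c u0 M X t (ball c (u0 + v * t))
      \<le> interf_count lam0 c u0 N (sl_traj v \<Theta>) t (ball c (u0 + v * t))"
    unfolding interf_count_iid_mobility[OF assms(5,3)] interf_count_iid_mobility[OF sl assms(3)] ..
qed

end
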